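(* For all $\theta\ge0$, $a\ge0$, $b\ge0$ with $ab<1$, the map $(\varphi,f)\mapsto\varphi(\Delta_\theta)f$ is a continuous bilinear map from $\mathcal{A}_a\times\mathcal{A}_b$ into $\mathcal{A}_c$, where $c=b(1-ab)^{-1}$.
   Context: For $b>0$ and entire $f$, $\|f\|_b=\sup_{k\in\mathbb{N}_0}b^{-k}|f^{(k)}(0)|$; for $a\ge0$, $\mathcal{A}_a=\{f\text{ entire}:\|f\|_b<\infty\ \forall b>a\}$ with the locally convex topology generated by the norms $\{\|\cdot\|_b:b>a\}$. $\Delta_\theta f=\theta f'+zf''$, and $\varphi(\Delta_\theta)f=\sum_{k\ge0}\sum_{m\ge0}\frac{\varphi^{(k)}(0)}{k!}\frac{f^{(m)}(0)}{m!}\Delta_\theta^kz^m$. *)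

theory Defs
  imports "HOL-Analysis.Analysis"
begin

definition dz :: "nat \<Rightarrow> (complex \<Rightarrow> complex) \<Rightarrow> complex" where
  "dz k f = (deriv ^^ k) f 0"

text \<open>The norm \<open>\<parallel>f\<parallel>_b = sup_k b^{-k} |f^{(k)}(0)|\<close> (used for b > 0 only).\<close>
definition enorm :: "real \<Rightarrow> (complex \<Rightarrow> complex) \<Rightarrow> real" where
  "enorm b f = (SUP k. cmod (dz k f) / b ^ k)"

definition Aspace :: "real \<Rightarrow> (complex \<Rightarrow> complex) set" where
  "Aspace a = {f. f holomorphic_on UNIV \<and>
      (\<forall>b>a. bdd_above (range (\<lambda>k. cmod (dz k f) / b ^ k)))}"

text \<open>The locally convex topology on \<open>A_a\<close> generated by the norms \<open>\<parallel>.\<parallel>_b\<close>, b > a: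
  U is open iff around each of its points it contains a ball of some norm \<open>\<parallel>.\<parallel>_b\<close>
  (the family of norms is directed, so these balls form a neighbourhood base).\<close>
definition Atop :: "real \<Rightarrow> (complex \<Rightarrow> complex) topology" where
  "Atop a = topology (\<lambda>U. U \<subseteq> Aspace a \<and>
      (\<forall>f\<in>U. \<exists>b>a. \<exists>r>0. {g \<in> Aspace a. enorm b (g - f) < r} \<subseteq> U))"

definition Delta :: "real \<Rightarrow> (complex \<Rightarrow> complex) \<Rightarrow> (complex \<Rightarrow> complex)" where
  "Delta \<theta> f = (\<lambda>z. complex_of_real \<theta> * deriv f z + z * deriv (deriv f) z)"

definition opterm :: "real \<Rightarrow> (complex \<Rightarrow> complex) \<Rightarrow> (complex \<Rightarrow> complex) \<Rightarrow> complex
    \<Rightarrow> nat \<Rightarrow> nat \<Rightarrow> complex" where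
  "opterm \<theta> \<phi> f z k m = (dz k \<phi> / fact k) * (dz m f / fact m) * ((Delta \<theta> ^^ k) (\<lambda>w. w ^ m)) z"

definition opphi :: "real \<Rightarrow> (complex \<Rightarrow> complex) \<Rightarrow> (complex \<Rightarrow> complex) \<Rightarrow> (complex \<Rightarrow> complex)" where
  "opphi \<theta> \<phi> f = (\<lambda>z. \<Sum>k. \<Sum>m. opterm \<theta> \<phi> f z k m)"

end

theory Submission
  imports Defs "HOL-Complex_Analysis.Cauchy_Integral_Formula"
begin

text \<open>Since \<open>\<Delta>\<^sub>\<theta> z^m = m (m - 1 + \<theta>) z^(m - 1)\<close>, the \<open>(k, m)\<close> summand of
  \<open>\<phi>(\<Delta>\<^sub>\<theta>) f\<close> is a multiple of \<open>z^n\<close> with \<open>n = m - k\<close>, and its weight is at most the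
  product of Pochhammer symbols \<open>(n + 1)\<^sub>k (n + T + 1)\<^sub>k\<close> for an integer \<open>T \<ge> \<theta>\<close>.
  The binomial theorem bounds \<open>(N + 1)\<^sub>k\<close> by \<open>k! y^(-k) (1 - y)^(-N)\<close> for every
  \<open>0 < y < 1\<close>, so for \<open>a' > a\<close>, \<open>b' > b\<close> and \<open>a' b' < y < 1\<close> the coefficient of \<open>z^n\<close>
  in row \<open>k\<close> is at most \<open>\<parallel>\<phi>\<parallel>_a' \<parallel>f\<parallel>_b' (1 - y)^(-T) (a' b' / y)^k (b' / (1 - y))^n / n!\<close>.
  Hence the double series converges absolutely and rearranges into an entire function
  whose \<open>n\<close>-th derivative at 0 is \<open>O(\<parallel>\<phi>\<parallel>_a' \<parallel>f\<parallel>_b' (b' / (1 - y))^n)\<close>, and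
  \<open>b' / (1 - y)\<close> tends to \<open>c\<close> as \<open>a' \<rightarrow> a\<close>, \<open>b' \<rightarrow> b\<close>, \<open>y \<rightarrow> ab\<close>. Together with
  bilinearity, this norm estimate gives continuity.\<close>

section \<open>\<open>\<Delta>\<^sub>\<theta>\<close> on monomials\<close>

definition Delta_weight :: "real \<Rightarrow> nat \<Rightarrow> real" where
  "Delta_weight \<theta> n = real n * (real n - 1 + \<theta>)"

text \<open>For \<open>j = m\<close> the factor is \<open>Delta_weight \<theta> 0 = 0\<close>, so \<open>\<Delta>\<^sub>\<theta>^k z^m = 0\<close> for \<open>k > m\<close>.\<close>
definition Delta_iter_weight :: "real \<Rightarrow> nat \<Rightarrow> nat \<Rightarrow> real" where
  "Delta_iter_weight \<theta> m k = (\<Prod>j<k. Delta_weight \<theta> (m - j))"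

lemma deriv_cmult_power:
  "deriv (\<lambda>z::complex. c * z ^ n) = (\<lambda>z. c * (of_nat n * z ^ (n - 1)))"
  by (rule ext, rule DERIV_imp_deriv) (auto intro!: derivative_eq_intros)

lemma Delta_cmult_power:
  "Delta \<theta> (\<lambda>z. c * z ^ n) = (\<lambda>z. c * of_real (Delta_weight \<theta> n) * z ^ (n - 1))"
proof -
  have deriv1: "deriv (\<lambda>z. c * z ^ n) = (\<lambda>z. (c * of_nat n) * z ^ (n - 1))"
    by (simp add: deriv_cmult_power mult.assoc)
  have "deriv (deriv (\<lambda>z. c * z ^ n)) = (\<lambda>z. (c * of_nat n) * (of_nat (n - 1) * z ^ (n - 1 - 1)))"
    unfolding deriv1 deriv_cmult_power ..
  then show ?thesis
    unfolding Delta_def Delta_weight_def deriv1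
    by (cases n; cases "n - 1") (auto simp: algebra_simps)
qed

lemma Delta_iter_power:
  "(Delta \<theta> ^^ k) (\<lambda>w. w ^ m) = (\<lambda>z. of_real (Delta_iter_weight \<theta> m k) * z ^ (m - k))"
  by (induction k) (simp_all add: Delta_iter_weight_def Delta_cmult_power)

lemma Delta_iter_weight_eq_0: "m < k \<Longrightarrow> Delta_iter_weight \<theta> m k = 0"
  unfolding Delta_iter_weight_def
  by (rule prod_zero) (auto simp: Delta_weight_def intro!: bexI[of _ m])

lemma Delta_iter_weight_diagonal:
  "Delta_iter_weight \<theta> (n + k) k = (\<Prod>i<k. Delta_weight \<theta> (n + 1 + i))"
proof -
  have "Delta_iter_weight \<theta> (n + k) k = (\<Prod>i<k. (\<lambda>i. Delta_weight \<theta> (n + 1 + i)) (k - Suc i))"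
    unfolding Delta_iter_weight_def
    by (rule prod.cong) (auto intro: arg_cong[where f = "Delta_weight \<theta>"])
  also have "\<dots> = (\<Prod>i<k. Delta_weight \<theta> (n + 1 + i))"
    by (rule prod.nat_diff_reindex)
  finally show ?thesis .
qed

lemma Delta_iter_weight_bounds:
  assumes "0 \<le> \<theta>" "\<theta> \<le> real T"
  shows "0 \<le> Delta_iter_weight \<theta> (n + k) k"
    and "Delta_iter_weight \<theta> (n + k) k \<le> pochhammer (real n + 1) k * pochhammer (real (n + T) + 1) k"
proof -
  have factor_bounds: "0 \<le> Delta_weight \<theta> (n + 1 + i)"
    "Delta_weight \<theta> (n + 1 + i) \<le> (real n + 1 + real i) * (real (n + T) + 1 + real i)" for i
    using assms unfolding Delta_weight_def by (auto intro!: mult_mono)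
  show "0 \<le> Delta_iter_weight \<theta> (n + k) k"
    unfolding Delta_iter_weight_diagonal by (intro prod_nonneg ballI factor_bounds)
  have "Delta_iter_weight \<theta> (n + k) k \<le> (\<Prod>i<k. (real n + 1 + real i) * (real (n + T) + 1 + real i))"
    unfolding Delta_iter_weight_diagonal by (intro prod_mono conjI factor_bounds)
  also have "\<dots> = pochhammer (real n + 1) k * pochhammer (real (n + T) + 1) k"
    by (simp add: pochhammer_prod atLeast0LessThan prod.distrib)
  finally show "Delta_iter_weight \<theta> (n + k) k \<le> pochhammer (real n + 1) k * pochhammer (real (n + T) + 1) k" .
qed

text \<open>\<open>(N + k choose k) y^k (1 - y)^N\<close> is one term of the binomial expansion of
  \<open>(y + (1 - y))^(N + k) = 1\<close>.\<close>
lemma pochhammer_le_fact_power: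
  assumes "0 < y" "y < 1"
  shows "pochhammer (real N + 1) k \<le> fact k * (1 / y) ^ k * (1 / (1 - y)) ^ N"
proof -
  have "real ((N + k) choose k) * y ^ k * (1 - y) ^ (N + k - k)
      \<le> (\<Sum>i\<le>N + k. real ((N + k) choose i) * y ^ i * (1 - y) ^ (N + k - i))"
    by (rule member_le_sum) (use assms in auto)
  also have "\<dots> = 1"
    using binomial_ring[of y "1 - y" "N + k"] by simp
  finally have "real ((N + k) choose k) * (y ^ k * (1 - y) ^ N) \<le> 1"
    by (simp add: mult.assoc)
  moreover have "real ((N + k) choose k) = pochhammer (real N + 1) k / fact k"
    by (simp add: binomial_gbinomial gbinomial_pochhammer')
  moreover have "0 < y ^ k * (1 - y) ^ N"
    using assms by simp
  ultimately show ?thesis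
    by (simp add: field_simps)
qed

lemma fact_add_eq_fact_mult_pochhammer: "(fact (n + k) :: real) = fact n * pochhammer (real n + 1) k"
  unfolding pochhammer_fact pochhammer_product' by (simp add: add_ac)

definition opcoeff :: "real \<Rightarrow> (complex \<Rightarrow> complex) \<Rightarrow> (complex \<Rightarrow> complex) \<Rightarrow> nat \<Rightarrow> nat \<Rightarrow> complex" where
  "opcoeff \<theta> \<phi> f k n =
     dz k \<phi> / fact k * (dz (n + k) f / fact (n + k)) * of_real (Delta_iter_weight \<theta> (n + k) k)"

lemma opterm_diagonal: "opterm \<theta> \<phi> f z k (n + k) = opcoeff \<theta> \<phi> f k n * z ^ n"
  unfolding opterm_def opcoeff_def Delta_iter_power by simp

lemma opterm_eq_0: "m < k \<Longrightarrow> opterm \<theta> \<phi> f z k m = 0"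
  unfolding opterm_def Delta_iter_power by (simp add: Delta_iter_weight_eq_0)

lemma suminf_opterm: "(\<Sum>m. opterm \<theta> \<phi> f z k m) = (\<Sum>n. opcoeff \<theta> \<phi> f k n * z ^ n)"
proof -
  have "(\<lambda>n. opterm \<theta> \<phi> f z k (n + k)) sums s \<longleftrightarrow> (\<lambda>m. opterm \<theta> \<phi> f z k m) sums s" for s
    by (rule sums_zero_iff_shift) (simp add: opterm_eq_0)
  then have "(sums) (\<lambda>n. opterm \<theta> \<phi> f z k (n + k)) = (sums) (opterm \<theta> \<phi> f z k)"
    by (simp add: fun_eq_iff)
  then show ?thesis
    unfolding suminf_def opterm_diagonal[symmetric] by simp
qed

lemma summable_opterm_iff:
  "summable (\<lambda>m. opterm \<theta> \<phi> f z k m) \<longleftrightarrow> summable (\<lambda>n. opcoeff \<theta> \<phi> f k n * z ^ n)"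
  unfolding opterm_diagonal[symmetric] by (rule summable_iff_shift[symmetric])

lemma opphi_eq_row_sums: "opphi \<theta> \<phi> f = (\<lambda>z. \<Sum>k. \<Sum>n. opcoeff \<theta> \<phi> f k n * z ^ n)"
  unfolding opphi_def suminf_opterm ..

lemma norm_opcoeff_le:
  assumes \<theta>: "0 \<le> \<theta>" "\<theta> \<le> real T" and y: "0 < y" "y < 1"
    and "0 \<le> A" "0 \<le> B" "0 \<le> a" "0 \<le> b"
    and \<phi>: "\<And>k. norm (dz k \<phi>) \<le> A * a ^ k" and f: "\<And>m. norm (dz m f) \<le> B * b ^ m"
  shows "norm (opcoeff \<theta> \<phi> f k n) \<le> A * B * (1 / (1 - y)) ^ T * (a * b / y) ^ k * ((b / (1 - y)) ^ n / fact n)"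
proof -
  define p1 where "p1 = pochhammer (real n + 1) k"
  define p2 where "p2 = pochhammer (real (n + T) + 1) k"
  have "0 < p1"
    unfolding p1_def by (intro pochhammer_pos) auto
  note weight = Delta_iter_weight_bounds[OF \<theta>, of n k, folded p1_def p2_def]
  have p2: "p2 \<le> fact k * (1 / y) ^ k * (1 / (1 - y)) ^ (n + T)"
    unfolding p2_def by (rule pochhammer_le_fact_power[OF y])
  have "norm (opcoeff \<theta> \<phi> f k n)
      = norm (dz k \<phi>) / fact k * (norm (dz (n + k) f) / fact (n + k)) * Delta_iter_weight \<theta> (n + k) k"
    unfolding opcoeff_def using weight(1) by (simp add: norm_mult norm_divide)
  also have "\<dots> \<le> (A * a ^ k) / fact k * ((B * b ^ (n + k)) / fact (n + k)) * (p1 * p2)"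
    using assms weight
    by (intro mult_mono divide_right_mono) (auto intro!: mult_nonneg_nonneg divide_nonneg_nonneg)
  also have "\<dots> = A * B * a ^ k * b ^ (n + k) * (p2 / fact k) / fact n"
    unfolding fact_add_eq_fact_mult_pochhammer p1_def[symmetric] using \<open>0 < p1\<close> by (simp add: field_simps)
  also have "\<dots> \<le> A * B * a ^ k * b ^ (n + k) * ((1 / y) ^ k * (1 / (1 - y)) ^ (n + T)) / fact n"
    using p2 assms by (intro divide_right_mono mult_left_mono) (auto simp: field_simps)
  also have "\<dots> = A * B * (1 / (1 - y)) ^ T * (a * b / y) ^ k * ((b / (1 - y)) ^ n / fact n)"
    by (simp add: power_add field_simps)
  finally show ?thesis .
qed

section \<open>Double series with exponential-geometric coefficient bounds\<close>

lemma summable_power_over_fact: "summable (\<lambda>n. (x :: real) ^ n / fact n)"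
  using summable_exp[of x] by (simp add: field_simps)

locale exp_geometric_array =
  fixes c :: "nat \<Rightarrow> nat \<Rightarrow> complex" and K u v :: real
  assumes u_nonneg: "0 \<le> u" and u_less_1: "u < 1" and v_nonneg: "0 \<le> v"
    and norm_le: "\<And>k n. norm (c k n) \<le> K * u ^ k * (v ^ n / fact n)"
begin

lemma K_nonneg: "0 \<le> K"
proof -
  have "norm (c 0 0) \<le> K"
    using norm_le[of 0 0] by simp
  then show ?thesis
    using norm_ge_zero order_trans by blast
qed

definition column_sum :: "nat \<Rightarrow> complex" where
  "column_sum n = (\<Sum>\<^sub>\<infinity>k. c k n)"

lemma norm_term_le: "norm (c k n * z ^ n) \<le> K * u ^ k * ((v * norm z) ^ n / fact n)"
proof -
  have "norm (c k n * z ^ n) = norm (c k n) * norm z ^ n"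
    by (simp add: norm_mult norm_power)
  also have "\<dots> \<le> K * u ^ k * (v ^ n / fact n) * norm z ^ n"
    by (intro mult_right_mono norm_le) auto
  finally show ?thesis
    by (simp add: power_mult_distrib)
qed

lemma terms_summable_on: "(\<lambda>(k, n). c k n * z ^ n) summable_on UNIV"
proof -
  define r where "r = norm z"
  define E where "E = (\<Sum>n. (v * r) ^ n / fact n)"
  have "0 \<le> r" "0 \<le> E"
    unfolding r_def E_def using v_nonneg by (auto intro!: suminf_nonneg summable_power_over_fact)
  have "(\<lambda>(k, n). K * u ^ k * ((v * r) ^ n / fact n)) summable_on Sigma UNIV (\<lambda>_. UNIV)"
  proof (rule summable_on_SigmaI[where g = "\<lambda>k. K * u ^ k * E"])
    fix k :: nat
    have "(\<lambda>n. K * u ^ k * ((v * r) ^ n / fact n)) sums (K * u ^ k * E)"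
      unfolding E_def by (intro sums_mult summable_sums summable_power_over_fact)
    then show "((\<lambda>n. (\<lambda>(k, n). K * u ^ k * ((v * r) ^ n / fact n)) (k, n)) has_sum K * u ^ k * E) UNIV"
      using K_nonneg u_nonneg v_nonneg \<open>0 \<le> r\<close> by (auto intro!: sums_nonneg_imp_has_sum)
  next
    have "summable (\<lambda>k. K * u ^ k * E)"
      using u_nonneg u_less_1 by (intro summable_mult2 summable_mult summable_geometric) auto
    then show "(\<lambda>k. K * u ^ k * E) summable_on UNIV"
      using K_nonneg u_nonneg \<open>0 \<le> E\<close> by (subst summable_on_UNIV_nonneg_real_iff) auto
  qed (use K_nonneg u_nonneg v_nonneg \<open>0 \<le> r\<close> in auto)
  then have "(\<lambda>(k, n). K * u ^ k * ((v * r) ^ n / fact n)) summable_on UNIV"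
    by simp
  then have "(\<lambda>x. norm ((\<lambda>(k, n). c k n * z ^ n) x)) summable_on UNIV"
    by (rule Infinite_Sum.abs_summable_on_comparison_test') (use norm_term_le r_def in auto)
  then show ?thesis
    by (simp add: summable_on_iff_abs_summable_on_complex)
qed

lemma norm_summable_row: "summable (\<lambda>n. norm (c k n * z ^ n))"
proof (rule summable_comparison_test')
  show "summable (\<lambda>n. K * u ^ k * ((v * norm z) ^ n / fact n))"
    by (intro summable_mult summable_power_over_fact)
  show "norm (norm (c k n * z ^ n)) \<le> K * u ^ k * ((v * norm z) ^ n / fact n)" for n
    using norm_term_le by simp
qed

lemma row_sum_eq_infsum: "(\<Sum>n. c k n * z ^ n) = (\<Sum>\<^sub>\<infinity>n. c k n * z ^ n)"
  by (rule infsumI[symmetric], rule norm_summable_imp_has_sum[OF norm_summable_row])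
    (rule summable_sums[OF summable_norm_cancel[OF norm_summable_row]])

lemma norm_summable_row_sums: "summable (\<lambda>k. norm (\<Sum>n. c k n * z ^ n))"
proof -
  have "(\<lambda>k. \<Sum>\<^sub>\<infinity>n. c k n * z ^ n) summable_on UNIV"
    using summable_on_Sigma_banach[of "\<lambda>k n. c k n * z ^ n" UNIV "\<lambda>_. UNIV"] terms_summable_on
    by (simp add: summable_on_iff_abs_summable_on_complex)
  then show ?thesis
    unfolding row_sum_eq_infsum
    by (simp add: summable_on_iff_abs_summable_on_complex summable_on_UNIV_nonneg_real_iff)
qed

lemma norm_column_sum_le: "norm (column_sum n) \<le> K / (1 - u) * (v ^ n / fact n)"
proof -
  have "(\<lambda>k. K * u ^ k * (v ^ n / fact n)) sums (K * (1 / (1 - u)) * (v ^ n / fact n))"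
    using u_nonneg u_less_1 by (intro sums_mult2 sums_mult geometric_sums) auto
  then have bound: "((\<lambda>k. K * u ^ k * (v ^ n / fact n)) has_sum (K / (1 - u) * (v ^ n / fact n))) UNIV"
    using K_nonneg u_nonneg v_nonneg by (auto intro!: sums_nonneg_imp_has_sum)
  have "(\<lambda>k. norm (c k n)) summable_on UNIV"
    by (rule Infinite_Sum.abs_summable_on_comparison_test'[OF has_sum_imp_summable[OF bound]])
      (rule norm_le)
  then show ?thesis
    unfolding column_sum_def
    by (intro norm_infsum_le[OF has_sum_infsum bound] norm_le)
      (simp add: summable_on_iff_abs_summable_on_complex)
qed

lemma norm_summable_column_series: "summable (\<lambda>n. norm (column_sum n * z ^ n))"
proof (rule summable_comparison_test'[where g = "\<lambda>n. K / (1 - u) * ((v * norm z) ^ n / fact n)"])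
  show "summable (\<lambda>n. K / (1 - u) * ((v * norm z) ^ n / fact n))"
    by (intro summable_mult summable_power_over_fact)
  fix n
  have "norm (column_sum n * z ^ n) \<le> K / (1 - u) * (v ^ n / fact n) * norm z ^ n"
    unfolding norm_mult norm_power by (intro mult_right_mono norm_column_sum_le) auto
  then show "norm (norm (column_sum n * z ^ n)) \<le> K / (1 - u) * ((v * norm z) ^ n / fact n)"
    by (simp add: power_mult_distrib)
qed

lemma suminf_row_sums_eq: "(\<Sum>k. \<Sum>n. c k n * z ^ n) = (\<Sum>n. column_sum n * z ^ n)"
proof -
  have "(\<Sum>k. \<Sum>n. c k n * z ^ n) = (\<Sum>\<^sub>\<infinity>k. \<Sum>\<^sub>\<infinity>n. c k n * z ^ n)"
    unfolding row_sum_eq_infsum[symmetric]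
    by (rule infsumI[symmetric], rule norm_summable_imp_has_sum[OF norm_summable_row_sums])
      (rule summable_sums[OF summable_norm_cancel[OF norm_summable_row_sums]])
  also have "\<dots> = (\<Sum>\<^sub>\<infinity>n. \<Sum>\<^sub>\<infinity>k. c k n * z ^ n)"
    by (rule infsum_swap_banach) (use terms_summable_on in simp)
  also have "\<dots> = (\<Sum>\<^sub>\<infinity>n. column_sum n * z ^ n)"
    unfolding column_sum_def by (simp add: infsum_cmult_left')
  also have "\<dots> = (\<Sum>n. column_sum n * z ^ n)"
    by (rule infsumI, rule norm_summable_imp_has_sum[OF norm_summable_column_series])
      (rule summable_sums[OF summable_norm_cancel[OF norm_summable_column_series]])
  finally show ?thesis .
qed

lemma fps_conv_radius_column_sum: "fps_conv_radius (Abs_fps column_sum) = \<infinity>"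
  unfolding fps_conv_radius_def
  by (rule conv_radius_inftyI'') (use summable_norm_cancel[OF norm_summable_column_series] in simp)

lemma row_sums_eq_eval_fps: "(\<lambda>z. \<Sum>k. \<Sum>n. c k n * z ^ n) = eval_fps (Abs_fps column_sum)"
  by (simp add: fun_eq_iff suminf_row_sums_eq eval_fps_def)

lemma holomorphic_row_sums: "(\<lambda>z. \<Sum>k. \<Sum>n. c k n * z ^ n) holomorphic_on UNIV"
  unfolding row_sums_eq_eval_fps
  by (rule holomorphic_on_eval_fps) (simp add: fps_conv_radius_column_sum)

lemma norm_dz_row_sums_le: "norm (dz n (\<lambda>z. \<Sum>k. \<Sum>m. c k m * z ^ m)) \<le> K / (1 - u) * v ^ n"
proof -
  have "eval_fps (Abs_fps column_sum) has_fps_expansion Abs_fps column_sum"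
    by (rule eval_fps_has_fps_expansion) (simp add: fps_conv_radius_column_sum)
  from fps_nth_fps_expansion[OF this, of n]
  have "dz n (\<lambda>z. \<Sum>k. \<Sum>m. c k m * z ^ m) = fact n * column_sum n"
    unfolding dz_def row_sums_eq_eval_fps by simp
  then have "norm (dz n (\<lambda>z. \<Sum>k. \<Sum>m. c k m * z ^ m)) = fact n * norm (column_sum n)"
    by (simp add: norm_mult)
  also have "\<dots> \<le> fact n * (K / (1 - u) * (v ^ n / fact n))"
    by (intro mult_left_mono norm_column_sum_le) auto
  finally show ?thesis
    by simp
qed

end

section \<open>The spaces \<open>\<A>\<^sub>a\<close> and their topology\<close>

lemma Aspace_holomorphic: "f \<in> Aspace a \<Longrightarrow> f holomorphic_on UNIV"
  unfolding Aspace_def by auto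

lemma norm_dz_le_enorm:
  assumes "f \<in> Aspace a" "a < b" "0 < b"
  shows "norm (dz k f) \<le> enorm b f * b ^ k"
proof -
  have "bdd_above (range (\<lambda>k. norm (dz k f) / b ^ k))"
    using assms unfolding Aspace_def by auto
  then have "norm (dz k f) / b ^ k \<le> enorm b f"
    unfolding enorm_def by (rule cSUP_upper[rotated]) simp
  then show ?thesis
    using \<open>0 < b\<close> by (simp add: divide_le_eq)
qed

lemma enorm_nonneg:
  assumes "f \<in> Aspace a" "a < b" "0 < b"
  shows "0 \<le> enorm b f"
proof -
  have "norm (dz 0 f) \<le> enorm b f"
    using norm_dz_le_enorm[OF assms, of 0] by simp
  then show ?thesis
    using norm_ge_zero order_trans by blast
qed

lemma enorm_le:
  assumes "\<And>k. norm (dz k f) \<le> M * b ^ k" "0 < b"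
  shows "enorm b f \<le> M"
  unfolding enorm_def
  by (rule cSUP_least) (use assms in \<open>auto simp: divide_le_eq\<close>)

lemma AspaceI:
  assumes "f holomorphic_on UNIV" "0 \<le> a"
    and "\<And>b. a < b \<Longrightarrow> \<exists>M. \<forall>k. norm (dz k f) \<le> M * b ^ k"
  shows "f \<in> Aspace a"
  unfolding Aspace_def
proof (intro CollectI conjI allI impI)
  fix b assume "a < b"
  then obtain M where "\<And>k. norm (dz k f) \<le> M * b ^ k"
    using assms(3) by blast
  then show "bdd_above (range (\<lambda>k. norm (dz k f) / b ^ k))"
    using \<open>0 \<le> a\<close> \<open>a < b\<close> by (intro bdd_aboveI2[of _ _ M]) (simp add: divide_le_eq)
qed (fact assms(1))

lemma dz_lincomb:
  assumes "f holomorphic_on UNIV" "g holomorphic_on UNIV"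
  shows "dz k (\<lambda>z. \<alpha> * f z + \<beta> * g z) = \<alpha> * dz k f + \<beta> * dz k g"
proof -
  have "(\<lambda>z. \<alpha> * f z) holomorphic_on UNIV" "(\<lambda>z. \<beta> * g z) holomorphic_on UNIV"
    using assms by (auto intro!: holomorphic_intros)
  then show ?thesis
    unfolding dz_def
    using higher_deriv_add[of _ UNIV _ 0 k] higher_deriv_cmult[OF assms(1) _ open_UNIV, of 0 k \<alpha>]
      higher_deriv_cmult[OF assms(2) _ open_UNIV, of 0 k \<beta>]
    by simp
qed

lemma norm_dz_lincomb_le:
  assumes "f \<in> Aspace a" "g \<in> Aspace a" "0 \<le> a" "a < b"
  shows "norm (dz k (\<lambda>z. \<alpha> * f z + \<beta> * g z)) \<le> (norm \<alpha> * enorm b f + norm \<beta> * enorm b g) * b ^ k"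
proof -
  have "0 < b"
    using assms by linarith
  have "norm (dz k (\<lambda>z. \<alpha> * f z + \<beta> * g z)) \<le> norm \<alpha> * norm (dz k f) + norm \<beta> * norm (dz k g)"
    unfolding dz_lincomb[OF assms(1,2)[THEN Aspace_holomorphic]]
    by (metis norm_mult norm_triangle_ineq)
  also have "\<dots> \<le> norm \<alpha> * (enorm b f * b ^ k) + norm \<beta> * (enorm b g * b ^ k)"
    using norm_dz_le_enorm[OF assms(1,4) \<open>0 < b\<close>] norm_dz_le_enorm[OF assms(2,4) \<open>0 < b\<close>]
    by (intro add_mono mult_left_mono) auto
  finally show ?thesis
    by (simp add: algebra_simps)
qed

lemma Aspace_lincomb:
  assumes "f \<in> Aspace a" "g \<in> Aspace a" "0 \<le> a"
  shows "(\<lambda>z. \<alpha> * f z + \<beta> * g z) \<in> Aspace a"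
proof (rule AspaceI)
  show "(\<lambda>z. \<alpha> * f z + \<beta> * g z) holomorphic_on UNIV"
    using assms(1,2)[THEN Aspace_holomorphic] by (auto intro!: holomorphic_intros)
  show "\<exists>M. \<forall>k. norm (dz k (\<lambda>z. \<alpha> * f z + \<beta> * g z)) \<le> M * b ^ k" if "a < b" for b
    using norm_dz_lincomb_le[OF assms that] by blast
qed (fact assms(3))

lemma enorm_lincomb_le:
  assumes "f \<in> Aspace a" "g \<in> Aspace a" "0 \<le> a" "a < b"
  shows "enorm b (\<lambda>z. \<alpha> * f z + \<beta> * g z) \<le> norm \<alpha> * enorm b f + norm \<beta> * enorm b g"
  by (rule enorm_le[OF norm_dz_lincomb_le[OF assms]]) (use assms in linarith)

lemma Aspace_diff: "f \<in> Aspace a \<Longrightarrow> g \<in> Aspace a \<Longrightarrow> 0 \<le> a \<Longrightarrow> f - g \<in> Aspace a"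
  using Aspace_lincomb[of f a g 1 "-1"] by (simp add: fun_diff_def)

lemma enorm_add_le:
  assumes "f \<in> Aspace a" "g \<in> Aspace a" "0 \<le> a" "a < b"
  shows "enorm b (\<lambda>z. f z + g z) \<le> enorm b f + enorm b g"
  using enorm_lincomb_le[OF assms, of 1 1] by simp

lemma enorm_le_add_diff:
  assumes "f \<in> Aspace a" "g \<in> Aspace a" "0 \<le> a" "a < b"
  shows "enorm b f \<le> enorm b g + enorm b (f - g)"
  using enorm_add_le[OF assms(2) Aspace_diff[OF assms(1,2,3)] assms(3,4)] by simp

lemma enorm_diff_triangle:
  assumes "f \<in> Aspace a" "g \<in> Aspace a" "h \<in> Aspace a" "0 \<le> a" "a < b"
  shows "enorm b (f - h) \<le> enorm b (f - g) + enorm b (g - h)"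
proof -
  have "f - h = (\<lambda>z. (f - g) z + (g - h) z)"
    by auto
  then show ?thesis
    using enorm_add_le[OF Aspace_diff[OF assms(1,2,4)] Aspace_diff[OF assms(2,3,4)] assms(4,5)] by simp
qed

lemma enorm_antimono:
  assumes "f \<in> Aspace a" "0 \<le> a" "a < b" "b \<le> b'"
  shows "enorm b' f \<le> enorm b f"
proof (rule enorm_le)
  fix k
  have "0 < b"
    using assms by linarith
  have "norm (dz k f) \<le> enorm b f * b ^ k"
    by (rule norm_dz_le_enorm[OF assms(1,3) \<open>0 < b\<close>])
  also have "\<dots> \<le> enorm b f * b' ^ k"
    using assms \<open>0 < b\<close> enorm_nonneg[OF assms(1,3) \<open>0 < b\<close>] by (intro mult_left_mono power_mono) auto
  finally show "norm (dz k f) \<le> enorm b f * b' ^ k" .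
qed (use assms in linarith)

lemma enorm_diff_self: "enorm b (f - f) = 0"
proof -
  have "f - f = (\<lambda>_. 0)"
    by auto
  then show ?thesis
    by (simp add: enorm_def dz_def)
qed

definition Aball :: "real \<Rightarrow> real \<Rightarrow> (complex \<Rightarrow> complex) \<Rightarrow> real \<Rightarrow> (complex \<Rightarrow> complex) set" where
  "Aball a b f r = {g \<in> Aspace a. enorm b (g - f) < r}"

definition Aopen :: "real \<Rightarrow> (complex \<Rightarrow> complex) set \<Rightarrow> bool" where
  "Aopen a U \<longleftrightarrow> U \<subseteq> Aspace a \<and> (\<forall>f\<in>U. \<exists>b>a. \<exists>r>0. Aball a b f r \<subseteq> U)"

lemma Atop_eq_topology_Aopen: "Atop a = topology (Aopen a)"
  by (simp add: Atop_def Aopen_def[abs_def] Aball_def)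

lemma Aball_subset_Aspace: "Aball a b f r \<subseteq> Aspace a"
  unfolding Aball_def by auto

lemma center_in_Aball: "f \<in> Aspace a \<Longrightarrow> 0 < r \<Longrightarrow> f \<in> Aball a b f r"
  unfolding Aball_def by (simp add: enorm_diff_self)

lemma Aball_mono:
  assumes "0 \<le> a" "f \<in> Aspace a" "a < b" "b \<le> b'" "r \<le> r'"
  shows "Aball a b f r \<subseteq> Aball a b' f r'"
  unfolding Aball_def
  using enorm_antimono[OF Aspace_diff[OF _ assms(2,1)] assms(1,3,4)] assms(5) by fastforce

lemma istopology_Aopen:
  assumes "0 \<le> a"
  shows "istopology (Aopen a)"
  unfolding istopology_def
proof (intro conjI allI impI ballI)
  fix S T assume S: "Aopen a S" and T: "Aopen a T"
  show "Aopen a (S \<inter> T)"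
    unfolding Aopen_def
  proof (intro conjI ballI)
    show "S \<inter> T \<subseteq> Aspace a"
      using S unfolding Aopen_def by blast
    fix f assume f: "f \<in> S \<inter> T"
    then have "f \<in> Aspace a"
      using S unfolding Aopen_def by blast
    obtain b1 r1 where "a < b1" "0 < r1" "Aball a b1 f r1 \<subseteq> S"
      using S f unfolding Aopen_def by blast
    moreover obtain b2 r2 where "a < b2" "0 < r2" "Aball a b2 f r2 \<subseteq> T"
      using T f unfolding Aopen_def by blast
    moreover have "Aball a (min b1 b2) f (min r1 r2) \<subseteq> Aball a b1 f r1"
      and "Aball a (min b1 b2) f (min r1 r2) \<subseteq> Aball a b2 f r2"
      using \<open>a < b1\<close> \<open>a < b2\<close> by (intro Aball_mono[OF assms \<open>f \<in> Aspace a\<close>]; simp)+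
    ultimately show "\<exists>b>a. \<exists>r>0. Aball a b f r \<subseteq> S \<inter> T"
      by (intro exI[of _ "min b1 b2"] exI[of _ "min r1 r2"] conjI) auto
  qed
next
  fix K assume K: "\<forall>S\<in>K. Aopen a S"
  show "Aopen a (\<Union>K)"
    unfolding Aopen_def
  proof (intro conjI ballI)
    show "\<Union>K \<subseteq> Aspace a"
      using K unfolding Aopen_def by blast
    fix f assume "f \<in> \<Union>K"
    then obtain S where "S \<in> K" "f \<in> S"
      by blast
    then obtain b r where "a < b" "0 < r" "Aball a b f r \<subseteq> S"
      using K unfolding Aopen_def by blast
    then show "\<exists>b>a. \<exists>r>0. Aball a b f r \<subseteq> \<Union>K"
      using \<open>S \<in> K\<close> by blast
  qed
qed

lemma openin_Atop: "0 \<le> a \<Longrightarrow> openin (Atop a) U \<longleftrightarrow> Aopen a U"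
  unfolding Atop_eq_topology_Aopen by (simp add: istopology_Aopen)

lemma topspace_Atop:
  assumes "0 \<le> a"
  shows "topspace (Atop a) = Aspace a"
proof -
  have "Aopen a (Aspace a)"
    unfolding Aopen_def by (meson Aball_subset_Aspace less_add_one zero_less_one order_refl)
  then show ?thesis
    unfolding topspace_def openin_Atop[OF assms] Aopen_def by auto
qed

lemma openin_Atop_Aball:
  assumes "0 \<le> a" "f \<in> Aspace a" "a < b"
  shows "openin (Atop a) (Aball a b f r)"
  unfolding openin_Atop[OF assms(1)] Aopen_def
proof (intro conjI ballI)
  fix g assume g: "g \<in> Aball a b f r"
  have "Aball a b g (r - enorm b (g - f)) \<subseteq> Aball a b f r"
    using g enorm_diff_triangle[OF _ _ assms(2,1,3), of _ g] unfolding Aball_def by fastforce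
  moreover have "0 < r - enorm b (g - f)"
    using g unfolding Aball_def by simp
  ultimately show "\<exists>b'>a. \<exists>s>0. Aball a b' g s \<subseteq> Aball a b f r"
    using assms(3) by blast
qed (fact Aball_subset_Aspace)

lemma continuous_map_Atop_prodI:
  assumes "0 \<le> a" "0 \<le> b" "0 \<le> c"
    and maps: "\<And>\<phi> f. \<phi> \<in> Aspace a \<Longrightarrow> f \<in> Aspace b \<Longrightarrow> F \<phi> f \<in> Aspace c"
    and near: "\<And>\<phi>0 f0 c' r. \<phi>0 \<in> Aspace a \<Longrightarrow> f0 \<in> Aspace b \<Longrightarrow> c < c' \<Longrightarrow> 0 < r \<Longrightarrow>
      \<exists>a'>a. \<exists>b'>b. \<exists>\<delta>>0. \<forall>\<phi>\<in>Aball a a' \<phi>0 \<delta>. \<forall>f\<in>Aball b b' f0 \<delta>. F \<phi> f \<in> Aball c c' (F \<phi>0 f0) r"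
  shows "continuous_map (prod_topology (Atop a) (Atop b)) (Atop c) (\<lambda>(\<phi>, f). F \<phi> f)"
  unfolding continuous_map_def topspace_prod_topology topspace_Atop[OF assms(1)] topspace_Atop[OF assms(2)]
    topspace_Atop[OF assms(3)]
proof (intro conjI allI impI)
  show "(\<lambda>(\<phi>, f). F \<phi> f) \<in> Aspace a \<times> Aspace b \<rightarrow> Aspace c"
    using maps by auto
  fix U assume U: "openin (Atop c) U"
  show "openin (prod_topology (Atop a) (Atop b)) {x \<in> Aspace a \<times> Aspace b. (case x of (\<phi>, f) \<Rightarrow> F \<phi> f) \<in> U}"
    unfolding openin_prod_topology_alt
  proof (intro allI impI)
    fix \<phi>0 f0 assume "(\<phi>0, f0) \<in> {x \<in> Aspace a \<times> Aspace b. (case x of (\<phi>, f) \<Rightarrow> F \<phi> f) \<in> U}"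
    then have \<phi>0: "\<phi>0 \<in> Aspace a" and f0: "f0 \<in> Aspace b" and "F \<phi>0 f0 \<in> U"
      by auto
    then obtain c' r where "c < c'" "0 < r" and ball: "Aball c c' (F \<phi>0 f0) r \<subseteq> U"
      using U unfolding openin_Atop[OF assms(3)] Aopen_def by blast
    then obtain a' b' \<delta> where "a < a'" "b < b'" "0 < \<delta>"
      and close: "\<And>\<phi> f. \<phi> \<in> Aball a a' \<phi>0 \<delta> \<Longrightarrow> f \<in> Aball b b' f0 \<delta> \<Longrightarrow> F \<phi> f \<in> Aball c c' (F \<phi>0 f0) r"
      using near[OF \<phi>0 f0] by meson
    show "\<exists>V W. openin (Atop a) V \<and> openin (Atop b) W \<and> \<phi>0 \<in> V \<and> f0 \<in> W \<and>
        V \<times> W \<subseteq> {x \<in> Aspace a \<times> Aspace b. (case x of (\<phi>, f) \<Rightarrow> F \<phi> f) \<in> U}"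
    proof (intro exI conjI)
      show "openin (Atop a) (Aball a a' \<phi>0 \<delta>)"
        by (rule openin_Atop_Aball[OF assms(1) \<phi>0 \<open>a < a'\<close>])
      show "openin (Atop b) (Aball b b' f0 \<delta>)"
        by (rule openin_Atop_Aball[OF assms(2) f0 \<open>b < b'\<close>])
      show "\<phi>0 \<in> Aball a a' \<phi>0 \<delta>" "f0 \<in> Aball b b' f0 \<delta>"
        using \<phi>0 f0 \<open>0 < \<delta>\<close> by (simp_all add: center_in_Aball)
      show "Aball a a' \<phi>0 \<delta> \<times> Aball b b' f0 \<delta> \<subseteq> {x \<in> Aspace a \<times> Aspace b. (case x of (\<phi>, f) \<Rightarrow> F \<phi> f) \<in> U}"
      proof clarify
        fix \<phi> f assume "\<phi> \<in> Aball a a' \<phi>0 \<delta>" "f \<in> Aball b b' f0 \<delta>"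
        then show "(\<phi>, f) \<in> Aspace a \<times> Aspace b \<and> F \<phi> f \<in> U"
          using close ball Aball_subset_Aspace by blast
      qed
    qed
  qed
qed

section \<open>Norm estimates for \<open>\<phi>(\<Delta>\<^sub>\<theta>) f\<close>\<close>

lemma exists_dominating_parameters:
  fixes a b c' :: real
  assumes "0 \<le> a" "0 \<le> b" "a * b < 1" "b / (1 - a * b) < c'"
  obtains a' b' y where "a < a'" "b < b'" "a' * b' < y" "y < 1" "b' / (1 - y) < c'"
proof -
  define Y where "Y t = (a + t) * (b + t) + t" for t :: real
  have Y: "(Y \<longlongrightarrow> a * b) (at_right 0)"
    unfolding Y_def by (rule tendsto_eq_intros refl)+ simp
  have "((\<lambda>t. b + t) \<longlongrightarrow> b + 0) (at_right (0::real))"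
    by (intro tendsto_intros)
  then have quotient: "((\<lambda>t. (b + t) / (1 - Y t)) \<longlongrightarrow> b / (1 - a * b)) (at_right 0)"
    using tendsto_divide[OF _ tendsto_diff[OF tendsto_const Y]] assms(3) by fastforce
  have "\<forall>\<^sub>F t in at_right 0. 0 < t \<and> Y t < 1 \<and> (b + t) / (1 - Y t) < c'"
    using eventually_at_right_less order_tendstoD(2)[OF Y assms(3)] order_tendstoD(2)[OF quotient assms(4)]
    by eventually_elim auto
  then obtain t where "0 < t" "Y t < 1" "(b + t) / (1 - Y t) < c'"
    using eventually_happens'[OF trivial_limit_at_right_real] by blast
  then show ?thesis
    by (intro that[of "a + t" "b + t" "Y t"]) (auto simp: Y_def)
qed

lemma exp_geometric_array_opcoeff:
  assumes "0 \<le> \<theta>" "0 \<le> a" "0 \<le> b" "a < a'" "b < b'" "a' * b' < y" "y < 1"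
    and "\<phi> \<in> Aspace a" "f \<in> Aspace b"
  shows "exp_geometric_array (opcoeff \<theta> \<phi> f)
           (enorm a' \<phi> * enorm b' f * (1 / (1 - y)) ^ nat \<lceil>\<theta>\<rceil>) (a' * b' / y) (b' / (1 - y))"
proof
  have "0 \<le> a' * b'"
    using assms by simp
  then have "0 < y"
    using assms by linarith
  show "0 \<le> a' * b' / y"
    using \<open>0 \<le> a' * b'\<close> \<open>0 < y\<close> by simp
  show "a' * b' / y < 1"
    using \<open>a' * b' < y\<close> \<open>0 < y\<close> by (simp add: divide_less_eq)
  show "0 \<le> b' / (1 - y)"
    using assms by simp
  show "norm (opcoeff \<theta> \<phi> f k n)
      \<le> enorm a' \<phi> * enorm b' f * (1 / (1 - y)) ^ nat \<lceil>\<theta>\<rceil> * (a' * b' / y) ^ k * ((b' / (1 - y)) ^ n / fact n)" for k n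
    using assms \<open>0 \<le> a' * b'\<close> \<open>0 < y\<close>
    by (intro norm_opcoeff_le enorm_nonneg norm_dz_le_enorm) auto
qed

lemma opphi_summable_holomorphic:
  assumes "0 \<le> \<theta>" "0 \<le> a" "0 \<le> b" "a * b < 1" "\<phi> \<in> Aspace a" "f \<in> Aspace b"
  shows "summable (\<lambda>m. opterm \<theta> \<phi> f z k m)"
    and "summable (\<lambda>k. \<Sum>m. opterm \<theta> \<phi> f z k m)"
    and "opphi \<theta> \<phi> f holomorphic_on UNIV"
proof -
  obtain a' b' y where "a < a'" "b < b'" "a' * b' < y" "y < 1"
    using exists_dominating_parameters[OF assms(2-4) less_add_one] .
  then interpret exp_geometric_array "opcoeff \<theta> \<phi> f"
      "enorm a' \<phi> * enorm b' f * (1 / (1 - y)) ^ nat \<lceil>\<theta>\<rceil>" "a' * b' / y" "b' / (1 - y)"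
    using assms by (intro exp_geometric_array_opcoeff) auto
  show "summable (\<lambda>m. opterm \<theta> \<phi> f z k m)"
    unfolding summable_opterm_iff by (rule summable_norm_cancel[OF norm_summable_row])
  show "summable (\<lambda>k. \<Sum>m. opterm \<theta> \<phi> f z k m)"
    unfolding suminf_opterm by (rule summable_norm_cancel[OF norm_summable_row_sums])
  show "opphi \<theta> \<phi> f holomorphic_on UNIV"
    unfolding opphi_eq_row_sums by (rule holomorphic_row_sums)
qed

lemma norm_dz_opphi_le:
  assumes "0 \<le> \<theta>" "0 \<le> a" "0 \<le> b" "a * b < 1" "b / (1 - a * b) < c'"
  obtains a' b' K where "a < a'" "b < b'" "0 \<le> K"
    and "\<And>\<phi> f n. \<phi> \<in> Aspace a \<Longrightarrow> f \<in> Aspace b \<Longrightarrow>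
           norm (dz n (opphi \<theta> \<phi> f)) \<le> K * enorm a' \<phi> * enorm b' f * c' ^ n"
proof -
  obtain a' b' y where params: "a < a'" "b < b'" "a' * b' < y" "y < 1" "b' / (1 - y) < c'"
    using exists_dominating_parameters[OF assms(2-5)] .
  define K where "K = (1 / (1 - y)) ^ nat \<lceil>\<theta>\<rceil> / (1 - a' * b' / y)"
  have "0 \<le> a' * b'"
    using params assms by simp
  then have "a' * b' / y < 1"
    using params by (simp add: divide_less_eq)
  then have "0 \<le> K"
    unfolding K_def using params by simp
  have "norm (dz n (opphi \<theta> \<phi> f)) \<le> K * enorm a' \<phi> * enorm b' f * c' ^ n"
    if "\<phi> \<in> Aspace a" "f \<in> Aspace b" for \<phi> f n
  proof -
    interpret exp_geometric_array "opcoeff \<theta> \<phi> f"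
        "enorm a' \<phi> * enorm b' f * (1 / (1 - y)) ^ nat \<lceil>\<theta>\<rceil>" "a' * b' / y" "b' / (1 - y)"
      using assms params that by (intro exp_geometric_array_opcoeff) auto
    have "norm (dz n (opphi \<theta> \<phi> f)) \<le> K * enorm a' \<phi> * enorm b' f * (b' / (1 - y)) ^ n"
      using norm_dz_row_sums_le[of n] unfolding opphi_eq_row_sums K_def by (simp add: field_simps)
    also have "\<dots> \<le> K * enorm a' \<phi> * enorm b' f * c' ^ n"
      using \<open>0 \<le> K\<close> enorm_nonneg[OF that(1) params(1)] enorm_nonneg[OF that(2) params(2)]
        v_nonneg params assms
      by (intro mult_left_mono power_mono mult_nonneg_nonneg) auto
    finally show ?thesis .
  qed
  then show ?thesis
    using params \<open>0 \<le> K\<close> that by blast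
qed

lemma opphi_in_Aspace:
  assumes "0 \<le> \<theta>" "0 \<le> a" "0 \<le> b" "a * b < 1" "\<phi> \<in> Aspace a" "f \<in> Aspace b"
  shows "opphi \<theta> \<phi> f \<in> Aspace (b / (1 - a * b))"
proof (rule AspaceI)
  show "opphi \<theta> \<phi> f holomorphic_on UNIV"
    by (rule opphi_summable_holomorphic(3)[OF assms])
  show "0 \<le> b / (1 - a * b)"
    using assms by simp
  show "\<exists>M. \<forall>n. norm (dz n (opphi \<theta> \<phi> f)) \<le> M * c' ^ n" if "b / (1 - a * b) < c'" for c'
    by (rule norm_dz_opphi_le[OF assms(1-4) that]) (use assms(5,6) in blast)
qed

lemma enorm_opphi_le:
  assumes "0 \<le> \<theta>" "0 \<le> a" "0 \<le> b" "a * b < 1" "b / (1 - a * b) < c'"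
  obtains a' b' K where "a < a'" "b < b'" "0 \<le> K"
    and "\<And>\<phi> f. \<phi> \<in> Aspace a \<Longrightarrow> f \<in> Aspace b \<Longrightarrow> enorm c' (opphi \<theta> \<phi> f) \<le> K * enorm a' \<phi> * enorm b' f"
proof -
  obtain a' b' K where params: "a < a'" "b < b'" "0 \<le> K"
    and bound: "\<And>\<phi> f n. \<phi> \<in> Aspace a \<Longrightarrow> f \<in> Aspace b \<Longrightarrow>
                  norm (dz n (opphi \<theta> \<phi> f)) \<le> K * enorm a' \<phi> * enorm b' f * c' ^ n"
    using norm_dz_opphi_le[OF assms] by blast
  have "0 \<le> b / (1 - a * b)"
    using assms by simp
  then have "0 < c'"
    using assms(5) by linarith
  show ?thesis
    using params by (rule that) (intro enorm_le bound \<open>0 < c'\<close>)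
qed

section \<open>Bilinearity and continuity\<close>

lemma opterm_lincomb_left:
  assumes "\<phi>1 holomorphic_on UNIV" "\<phi>2 holomorphic_on UNIV"
  shows "opterm \<theta> (\<lambda>z. \<alpha> * \<phi>1 z + \<beta> * \<phi>2 z) f z k m = \<alpha> * opterm \<theta> \<phi>1 f z k m + \<beta> * opterm \<theta> \<phi>2 f z k m"
  unfolding opterm_def dz_lincomb[OF assms] by (simp add: algebra_simps add_divide_distrib)

lemma opterm_lincomb_right:
  assumes "f1 holomorphic_on UNIV" "f2 holomorphic_on UNIV"
  shows "opterm \<theta> \<phi> (\<lambda>z. \<alpha> * f1 z + \<beta> * f2 z) z k m = \<alpha> * opterm \<theta> \<phi> f1 z k m + \<beta> * opterm \<theta> \<phi> f2 z k m"
  unfolding opterm_def dz_lincomb[OF assms] by (simp add: algebra_simps add_divide_distrib)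

lemma suminf_suminf_lincomb:
  fixes X Y :: "nat \<Rightarrow> nat \<Rightarrow> 'a :: {real_normed_field}"
  assumes "\<And>k. summable (X k)" "\<And>k. summable (Y k)"
    and "summable (\<lambda>k. \<Sum>m. X k m)" "summable (\<lambda>k. \<Sum>m. Y k m)"
  shows "(\<Sum>k. \<Sum>m. \<alpha> * X k m + \<beta> * Y k m) = \<alpha> * (\<Sum>k. \<Sum>m. X k m) + \<beta> * (\<Sum>k. \<Sum>m. Y k m)"
  using assms by (simp add: suminf_add[symmetric] suminf_mult summable_mult)

lemma opphi_lincomb_left:
  assumes "0 \<le> \<theta>" "0 \<le> a" "0 \<le> b" "a * b < 1" "\<phi>1 \<in> Aspace a" "\<phi>2 \<in> Aspace a" "f \<in> Aspace b"
  shows "opphi \<theta> (\<lambda>z. \<alpha> * \<phi>1 z + \<beta> * \<phi>2 z) f = (\<lambda>z. \<alpha> * opphi \<theta> \<phi>1 f z + \<beta> * opphi \<theta> \<phi>2 f z)"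
  unfolding opphi_def opterm_lincomb_left[OF assms(5,6)[THEN Aspace_holomorphic]]
  using opphi_summable_holomorphic[OF assms(1-4) _ assms(7)] assms(5,6)
  by (simp add: suminf_suminf_lincomb)

lemma opphi_lincomb_right:
  assumes "0 \<le> \<theta>" "0 \<le> a" "0 \<le> b" "a * b < 1" "\<phi> \<in> Aspace a" "f1 \<in> Aspace b" "f2 \<in> Aspace b"
  shows "opphi \<theta> \<phi> (\<lambda>z. \<alpha> * f1 z + \<beta> * f2 z) = (\<lambda>z. \<alpha> * opphi \<theta> \<phi> f1 z + \<beta> * opphi \<theta> \<phi> f2 z)"
  unfolding opphi_def opterm_lincomb_right[OF assms(6,7)[THEN Aspace_holomorphic]]
  using opphi_summable_holomorphic[OF assms(1-5)] assms(6,7)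
  by (simp add: suminf_suminf_lincomb)

lemma opphi_diff:
  assumes "0 \<le> \<theta>" "0 \<le> a" "0 \<le> b" "a * b < 1"
    and "\<phi> \<in> Aspace a" "\<phi>0 \<in> Aspace a" "f \<in> Aspace b" "f0 \<in> Aspace b"
  shows "opphi \<theta> \<phi> f - opphi \<theta> \<phi>0 f0 = (\<lambda>z. opphi \<theta> (\<phi> - \<phi>0) f z + opphi \<theta> \<phi>0 (f - f0) z)"
proof -
  have "opphi \<theta> \<phi> f = (\<lambda>z. opphi \<theta> (\<phi> - \<phi>0) f z + opphi \<theta> \<phi>0 f z)"
    using opphi_lincomb_left[OF assms(1-4) Aspace_diff[OF assms(5,6,2)] assms(6,7), of 1 1] by simp
  moreover have "opphi \<theta> \<phi>0 f = (\<lambda>z. opphi \<theta> \<phi>0 (f - f0) z + opphi \<theta> \<phi>0 f0 z)"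
    using opphi_lincomb_right[OF assms(1-4,6) Aspace_diff[OF assms(7,8,3)] assms(8), of 1 1] by simp
  ultimately show ?thesis
    by (simp add: fun_eq_iff)
qed

lemma exists_delta_bilinear_bound:
  fixes K P Q r :: real
  assumes "0 \<le> K" "0 \<le> P" "0 \<le> Q" "0 < r"
  obtains \<delta> where "0 < \<delta>"
    and "\<And>x y. 0 \<le> x \<Longrightarrow> x < \<delta> \<Longrightarrow> 0 \<le> y \<Longrightarrow> y < \<delta> \<Longrightarrow> K * (x * (Q + y) + P * y) < r"
proof
  define M where "M = K * (P + Q + 1)"
  define \<delta> where "\<delta> = min 1 (r / (M + 1))"
  have "0 \<le> M"
    unfolding M_def using assms by simp
  then show "0 < \<delta>"
    unfolding \<delta>_def using assms by simp
  fix x y assume "0 \<le> x" "x < \<delta>" "0 \<le> y" "y < \<delta>"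
  then have "x * (Q + y) + P * y \<le> \<delta> * (Q + 1) + P * \<delta>"
    using assms \<open>0 < \<delta>\<close> unfolding \<delta>_def by (intro add_mono mult_mono mult_left_mono) auto
  then have "K * (x * (Q + y) + P * y) \<le> K * (\<delta> * (Q + 1) + P * \<delta>)"
    using assms(1) by (rule mult_left_mono)
  also have "\<dots> = \<delta> * M"
    unfolding M_def by (simp add: algebra_simps)
  also have "\<dots> < r"
    using \<open>0 \<le> M\<close> assms unfolding \<delta>_def by (simp add: min_def field_simps)
  finally show "K * (x * (Q + y) + P * y) < r" .
qed

lemma enorm_opphi_diff_le:
  assumes "0 \<le> \<theta>" "0 \<le> a" "0 \<le> b" "a * b < 1" "b / (1 - a * b) < c'"
  obtains a' b' K where "a < a'" "b < b'" "0 \<le> K"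
    and "\<And>\<phi> \<phi>0 f f0. \<phi> \<in> Aspace a \<Longrightarrow> \<phi>0 \<in> Aspace a \<Longrightarrow> f \<in> Aspace b \<Longrightarrow> f0 \<in> Aspace b \<Longrightarrow>
           enorm c' (opphi \<theta> \<phi> f - opphi \<theta> \<phi>0 f0)
             \<le> K * (enorm a' (\<phi> - \<phi>0) * (enorm b' f0 + enorm b' (f - f0)) + enorm a' \<phi>0 * enorm b' (f - f0))"
proof -
  obtain a' b' K where params: "a < a'" "b < b'" "0 \<le> K"
    and bound: "\<And>\<phi> f. \<phi> \<in> Aspace a \<Longrightarrow> f \<in> Aspace b \<Longrightarrow> enorm c' (opphi \<theta> \<phi> f) \<le> K * enorm a' \<phi> * enorm b' f"
    using enorm_opphi_le[OF assms] by blast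
  have "0 < a'" "0 \<le> b / (1 - a * b)"
    using assms params by simp_all
  have "enorm c' (opphi \<theta> \<phi> f - opphi \<theta> \<phi>0 f0)
      \<le> K * (enorm a' (\<phi> - \<phi>0) * (enorm b' f0 + enorm b' (f - f0)) + enorm a' \<phi>0 * enorm b' (f - f0))"
    if \<phi>: "\<phi> \<in> Aspace a" "\<phi>0 \<in> Aspace a" and f: "f \<in> Aspace b" "f0 \<in> Aspace b" for \<phi> \<phi>0 f f0
  proof -
    have d\<phi>: "\<phi> - \<phi>0 \<in> Aspace a" and df: "f - f0 \<in> Aspace b"
      using \<phi> f assms by (simp_all add: Aspace_diff)
    have "enorm c' (opphi \<theta> \<phi> f - opphi \<theta> \<phi>0 f0)
        \<le> enorm c' (opphi \<theta> (\<phi> - \<phi>0) f) + enorm c' (opphi \<theta> \<phi>0 (f - f0))"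
      unfolding opphi_diff[OF assms(1-4) \<phi> f]
      by (rule enorm_add_le[OF opphi_in_Aspace[OF assms(1-4) d\<phi> f(1)] opphi_in_Aspace[OF assms(1-4) \<phi>(2) df]])
        (use \<open>0 \<le> b / (1 - a * b)\<close> assms(5) in auto)
    also have "\<dots> \<le> K * (enorm a' (\<phi> - \<phi>0) * enorm b' f + enorm a' \<phi>0 * enorm b' (f - f0))"
      using bound[OF d\<phi> f(1)] bound[OF \<phi>(2) df] by (simp add: algebra_simps)
    also have "\<dots> \<le> K * (enorm a' (\<phi> - \<phi>0) * (enorm b' f0 + enorm b' (f - f0)) + enorm a' \<phi>0 * enorm b' (f - f0))"
      using params enorm_nonneg[OF d\<phi> \<open>a < a'\<close> \<open>0 < a'\<close>] enorm_le_add_diff[OF f assms(3)]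
      by (intro mult_left_mono add_mono order_refl) auto
    finally show ?thesis .
  qed
  then show ?thesis
    using params that by blast
qed

lemma continuous_map_opphi:
  assumes "0 \<le> \<theta>" "0 \<le> a" "0 \<le> b" "a * b < 1"
  shows "continuous_map (prod_topology (Atop a) (Atop b)) (Atop (b / (1 - a * b))) (\<lambda>(\<phi>, f). opphi \<theta> \<phi> f)"
proof (rule continuous_map_Atop_prodI)
  show "opphi \<theta> \<phi> f \<in> Aspace (b / (1 - a * b))" if "\<phi> \<in> Aspace a" "f \<in> Aspace b" for \<phi> f
    by (rule opphi_in_Aspace[OF assms that])
  fix \<phi>0 f0 and c' r :: real
  assume \<phi>0: "\<phi>0 \<in> Aspace a" and f0: "f0 \<in> Aspace b" and c': "b / (1 - a * b) < c'" and "0 < r"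
  obtain a' b' K where "a < a'" "b < b'" "0 \<le> K"
    and bound: "\<And>\<phi> f. \<phi> \<in> Aspace a \<Longrightarrow> f \<in> Aspace b \<Longrightarrow>
       enorm c' (opphi \<theta> \<phi> f - opphi \<theta> \<phi>0 f0)
         \<le> K * (enorm a' (\<phi> - \<phi>0) * (enorm b' f0 + enorm b' (f - f0)) + enorm a' \<phi>0 * enorm b' (f - f0))"
    using enorm_opphi_diff_le[OF assms c'] \<phi>0 f0 by metis
  have "0 < a'" "0 < b'"
    using assms \<open>a < a'\<close> \<open>b < b'\<close> by simp_all
  obtain \<delta> where "0 < \<delta>" and small: "\<And>x y. 0 \<le> x \<Longrightarrow> x < \<delta> \<Longrightarrow> 0 \<le> y \<Longrightarrow> y < \<delta> \<Longrightarrow>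
      K * (x * (enorm b' f0 + y) + enorm a' \<phi>0 * y) < r"
    using exists_delta_bilinear_bound[OF \<open>0 \<le> K\<close> enorm_nonneg[OF \<phi>0 \<open>a < a'\<close> \<open>0 < a'\<close>]
        enorm_nonneg[OF f0 \<open>b < b'\<close> \<open>0 < b'\<close>] \<open>0 < r\<close>] by blast
  have "opphi \<theta> \<phi> f \<in> Aball (b / (1 - a * b)) c' (opphi \<theta> \<phi>0 f0) r"
    if "\<phi> \<in> Aball a a' \<phi>0 \<delta>" "f \<in> Aball b b' f0 \<delta>" for \<phi> f
  proof -
    from that have \<phi>: "\<phi> \<in> Aspace a" and f: "f \<in> Aspace b"
      and close: "enorm a' (\<phi> - \<phi>0) < \<delta>" "enorm b' (f - f0) < \<delta>"
      unfolding Aball_def by auto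
    have "enorm c' (opphi \<theta> \<phi> f - opphi \<theta> \<phi>0 f0) < r"
      using bound[OF \<phi> f] small[OF _ close(1) _ close(2)]
        enorm_nonneg[OF Aspace_diff[OF \<phi> \<phi>0 assms(2)] \<open>a < a'\<close> \<open>0 < a'\<close>]
        enorm_nonneg[OF Aspace_diff[OF f f0 assms(3)] \<open>b < b'\<close> \<open>0 < b'\<close>]
      by fastforce
    then show ?thesis
      unfolding Aball_def using opphi_in_Aspace[OF assms \<phi> f] by simp
  qed
  then show "\<exists>a'>a. \<exists>b'>b. \<exists>\<delta>>0. \<forall>\<phi>\<in>Aball a a' \<phi>0 \<delta>. \<forall>f\<in>Aball b b' f0 \<delta>.
      opphi \<theta> \<phi> f \<in> Aball (b / (1 - a * b)) c' (opphi \<theta> \<phi>0 f0) r"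
    using \<open>a < a'\<close> \<open>b < b'\<close> \<open>0 < \<delta>\<close> by blast
qed (use assms in auto)

theorem corollary1p6:
  fixes \<theta> a b :: real
  assumes "\<theta> \<ge> 0" and "a \<ge> 0" and "b \<ge> 0" and "a * b < 1"
  defines "c \<equiv> b / (1 - a * b)"
  shows "(\<forall>\<phi>\<in>Aspace a. \<forall>f\<in>Aspace b. \<forall>z.
            (\<forall>k. summable (\<lambda>m. opterm \<theta> \<phi> f z k m)) \<and>
            summable (\<lambda>k. \<Sum>m. opterm \<theta> \<phi> f z k m))
       \<and> (\<forall>\<phi>\<in>Aspace a. \<forall>f\<in>Aspace b. opphi \<theta> \<phi> f \<in> Aspace c)
       \<and> (\<forall>\<phi>1\<in>Aspace a. \<forall>\<phi>2\<in>Aspace a. \<forall>f\<in>Aspace b. \<forall>\<alpha> \<beta> :: complex.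
            opphi \<theta> (\<lambda>z. \<alpha> * \<phi>1 z + \<beta> * \<phi>2 z) f
              = (\<lambda>z. \<alpha> * opphi \<theta> \<phi>1 f z + \<beta> * opphi \<theta> \<phi>2 f z))
       \<and> (\<forall>\<phi>\<in>Aspace a. \<forall>f1\<in>Aspace b. \<forall>f2\<in>Aspace b. \<forall>\<alpha> \<beta> :: complex.
            opphi \<theta> \<phi> (\<lambda>z. \<alpha> * f1 z + \<beta> * f2 z)
              = (\<lambda>z. \<alpha> * opphi \<theta> \<phi> f1 z + \<beta> * opphi \<theta> \<phi> f2 z))
       \<and> continuous_map (prod_topology (Atop a) (Atop b)) (Atop c)
            (\<lambda>(\<phi>, f). opphi \<theta> \<phi> f)"
  unfolding c_def
proof (intro conjI ballI allI)
  fix \<phi> f z k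
  assume "\<phi> \<in> Aspace a" "f \<in> Aspace b"
  then show "summable (\<lambda>m. opterm \<theta> \<phi> f z k m)" "summable (\<lambda>k. \<Sum>m. opterm \<theta> \<phi> f z k m)"
    and "opphi \<theta> \<phi> f \<in> Aspace (b / (1 - a * b))"
    by (simp_all add: opphi_summable_holomorphic[OF assms(1-4)] opphi_in_Aspace[OF assms(1-4)])
next
  fix \<phi>1 \<phi>2 f and \<alpha> \<beta> :: complex
  assume "\<phi>1 \<in> Aspace a" "\<phi>2 \<in> Aspace a" "f \<in> Aspace b"
  then show "opphi \<theta> (\<lambda>z. \<alpha> * \<phi>1 z + \<beta> * \<phi>2 z) f = (\<lambda>z. \<alpha> * opphi \<theta> \<phi>1 f z + \<beta> * opphi \<theta> \<phi>2 f z)"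
    by (rule opphi_lincomb_left[OF assms(1-4)])
next
  fix \<phi> f1 f2 and \<alpha> \<beta> :: complex
  assume "\<phi> \<in> Aspace a" "f1 \<in> Aspace b" "f2 \<in> Aspace b"
  then show "opphi \<theta> \<phi> (\<lambda>z. \<alpha> * f1 z + \<beta> * f2 z) = (\<lambda>z. \<alpha> * opphi \<theta> \<phi> f1 z + \<beta> * opphi \<theta> \<phi> f2 z)"
    by (rule opphi_lincomb_right[OF assms(1-4)])
qed (rule continuous_map_opphi[OF assms(1-4)])

end
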